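(* Let $p\ge2$ be an integer and let $(a_n)_{n\ge0}$ be the Patalan numbers of order $p$. Define $d_0=-1/p$ and $d_n=a_{n-1}$ for $n\ge1$, with generating function $D(x)=\sum_{n\ge0}d_nx^n=xA(x)-1/p$. Then $g(D(x))=x$, where $g(x)=\frac{1-(-px)^p}{p^2}$, and for every $n\ge2$, \[ d_n=(-1)^p\,p^{p-2}\,t^{(p)}_n , \] where $t^{(k)}_n$ are the truncated convolution powers of the sequence $(d_n)$.
   Context: For an integer $p\ge2$, the Patalan numbers of order $p$ are the coefficients $a_n$ of \[ A(x)=\sum_{n\ge0}a_nx^n=\frac{1-(1-p^2x)^{1/p}}{p\,x} \] (so $a_0=1$). For a sequence $(d_n)_{n\ge0}$ with generating function $D(x)$, set $d^{(k)}_n=[x^n]D(x)^k$ for $k\ge1$, $n\ge0$; the truncated convolution powers are defined recursively by $t^{(1)}_n=0$ for all $n$ and, for $k>1$, \[ t^{(k)}_n=\sum_{j=1}^{n-1}d_{n-j}\,d^{(k-1)}_j+d_0\,t^{(k-1)}_n \] (the sum being empty when $n\le1$). *)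

theory Defs
  imports "HOL-Computational_Algebra.Formal_Power_Series"
begin

text \<open>The formal power series (1 - p^2 x)^(1/p), via the generalized binomial series
  (1+y)^a = fps_binomial a composed with y = -p^2 x.\<close>
definition root_series :: "nat \<Rightarrow> real fps" where
  "root_series p = fps_compose (fps_binomial (1 / real p)) (fps_const (- ((real p) ^ 2)) * fps_X)"

text \<open>Patalan generating function A(x) = (1 - (1 - p^2 x)^(1/p)) / (p x).
  Division by x is the shift of coefficients (1 - root_series p has zero constant term).\<close>
definition patalan_fps :: "nat \<Rightarrow> real fps" where
  "patalan_fps p = fps_const (1 / real p) * fps_shift 1 (1 - root_series p)"

definition patalan :: "nat \<Rightarrow> nat \<Rightarrow> real" where
  "patalan p n = fps_nth (patalan_fps p) n"

definition dseq :: "nat \<Rightarrow> nat \<Rightarrow> real" where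
  "dseq p n = (if n = 0 then - 1 / real p else patalan p (n - 1))"

definition D_fps :: "nat \<Rightarrow> real fps" where
  "D_fps p = fps_X * patalan_fps p - fps_const (1 / real p)"

definition g_fps :: "nat \<Rightarrow> real fps \<Rightarrow> real fps" where
  "g_fps p y = fps_const (1 / (real p)^2) * (1 - (fps_const (- real p) * y) ^ p)"

text \<open>Truncated convolution powers t^(k)_n of a sequence d (k >= 1; value at k = 0 is irrelevant).\<close>
fun tconv :: "(nat \<Rightarrow> real) \<Rightarrow> nat \<Rightarrow> nat \<Rightarrow> real" where
  "tconv d 0 n = 0"
| "tconv d (Suc 0) n = 0"
| "tconv d (Suc (Suc k)) n =
     (\<Sum>j = 1..n - 1. d (n - j) * fps_nth (Abs_fps d ^ Suc k) j) + d 0 * tconv d (Suc k) n"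

end

theory Submission
  imports Defs
begin

text \<open>Since D = -(1/p) (1 - p^2 x)^(1/p), we have (-p D)^p = 1 - p^2 x. This is g(D) = x, and it
  shows that every coefficient of D^p of index n \<ge> 2 vanishes. Unrolling the recursion,
  t^(k)_n is [x^n] D^k with the k terms d_0^(k-1) d_n left out, so t^(p)_n = -p d_0^(p-1) d_n,
  and d_0 = -1/p turns this into the claimed identity.\<close>

lemma tconv_Suc_eq_fps_nth_power:
  assumes "n \<ge> 1"
  shows "tconv d (Suc k) n = fps_nth (Abs_fps d ^ Suc k) n - real (Suc k) * d 0 ^ k * d n"
proof (induction k)
  case 0
  then show ?case by simp
next
  case (Suc k)
  let ?G = "Abs_fps d ^ Suc k"
  obtain m where m: "n = Suc m" using assms by (cases n) auto
  have "fps_nth (Abs_fps d ^ Suc (Suc k)) n = (\<Sum>i=0..n. fps_nth ?G i * d (n - i))"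
    by (simp only: power_Suc2 fps_mult_nth fps_nth_Abs_fps)
  also have "\<dots> = fps_nth ?G 0 * d n + (\<Sum>i=1..m. fps_nth ?G i * d (n - i)) + fps_nth ?G n * d 0"
    unfolding m by (simp add: sum.atLeast_Suc_atMost sum.cl_ivl_Suc)
  also have "fps_nth ?G 0 = d 0 ^ Suc k"
    by (simp add: fps_nth_power_0)
  finally have power: "fps_nth (Abs_fps d ^ Suc (Suc k)) n
      = d 0 ^ Suc k * d n + (\<Sum>i=1..m. fps_nth ?G i * d (n - i)) + fps_nth ?G n * d 0" .
  have "tconv d (Suc (Suc k)) n
      = (\<Sum>i=1..m. d (n - i) * fps_nth ?G i) + d 0 * (fps_nth ?G n - real (Suc k) * d 0 ^ k * d n)"
    using Suc.IH by (simp add: m)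
  then show ?case
    unfolding power by (simp add: algebra_simps)
qed

lemma tconv_eq_if_fps_nth_power_eq_0:
  assumes "n \<ge> 1" "k \<ge> 1" "fps_nth (Abs_fps d ^ k) n = 0"
  shows "tconv d k n = - real k * d 0 ^ (k - 1) * d n"
proof -
  obtain j where "k = Suc j" using assms(2) by (cases k) auto
  then show ?thesis
    using tconv_Suc_eq_fps_nth_power[OF assms(1), of d j] assms(3)
    by (simp add: algebra_simps del: power_Suc)
qed

lemma root_series_power:
  assumes "p > 0"
  shows "root_series p ^ p = 1 - fps_const ((real p)^2) * fps_X"
proof -
  let ?c = "fps_const (- ((real p) ^ 2)) * fps_X"
  have "root_series p ^ p = fps_binomial (1 / real p) ^ p oo ?c"
    unfolding root_series_def by (rule fps_compose_power) simp
  also have "fps_binomial (1 / real p) ^ p = 1 + fps_X"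
    using assms by (simp add: fps_binomial_power fps_binomial_1)
  also have "(1 + fps_X) oo ?c = 1 + ?c"
    by (simp add: fps_compose_add_distrib)
  also have "1 + ?c = 1 - fps_const ((real p)^2) * fps_X"
    by (metis diff_conv_add_uminus fps_const_neg mult_minus_left)
  finally show ?thesis .
qed

lemma Abs_fps_dseq: "Abs_fps (dseq p) = D_fps p"
  by (rule fps_ext) (simp add: dseq_def D_fps_def patalan_def fps_X_mult_nth)

lemma D_fps_eq_root_series:
  assumes "p > 0"
  shows "fps_const (- real p) * D_fps p = root_series p"
proof -
  have "fps_X * fps_shift 1 (1 - root_series p) = 1 - root_series p"
    by (rule fps_ext) (simp add: fps_X_mult_nth root_series_def fps_compose_nth)
  then have "D_fps p = fps_const (1 / real p) * (1 - root_series p) - fps_const (1 / real p)"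
    unfolding D_fps_def patalan_fps_def by (metis mult.left_commute)
  also have "\<dots> = - (fps_const (1 / real p) * root_series p)"
    by (simp add: algebra_simps)
  also have "\<dots> = fps_const (- (1 / real p)) * root_series p"
    by (metis fps_const_neg mult_minus_left)
  finally have "D_fps p = fps_const (- (1 / real p)) * root_series p" .
  then show ?thesis
    using assms by (simp only: mult.assoc[symmetric] fps_const_mult) simp
qed

lemma D_fps_power:
  assumes "p > 0"
  shows "fps_const ((- real p) ^ p) * D_fps p ^ p = 1 - fps_const ((real p)^2) * fps_X"
proof -
  have "(fps_const (- real p) * D_fps p) ^ p = 1 - fps_const ((real p)^2) * fps_X"
    using root_series_power[OF assms] D_fps_eq_root_series[OF assms] by simp
  then show ?thesis
    by (simp only: power_mult_distrib fps_const_power)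
qed

lemma g_fps_D_fps:
  assumes "p > 0"
  shows "g_fps p (D_fps p) = fps_X"
  using D_fps_eq_root_series[OF assms] root_series_power[OF assms] assms
  by (simp add: g_fps_def mult.assoc[symmetric] fps_const_mult[symmetric])

lemma fps_nth_D_fps_power_eq_0:
  assumes "p > 0" "n \<ge> 2"
  shows "fps_nth (D_fps p ^ p) n = 0"
proof -
  have "fps_nth (fps_const ((- real p) ^ p) * D_fps p ^ p) n = 0"
    using D_fps_power[OF assms(1)] assms(2) by simp
  then show ?thesis
    using assms(1) by simp
qed

lemma neg_inverse_power_cancel:
  fixes x :: real
  assumes "x \<noteq> 0" "p \<ge> 2"
  shows "(-1) ^ p * x ^ (p - 2) * (- x * (- 1 / x) ^ (p - 1)) = 1"
proof -
  obtain m where p: "p = Suc (Suc m)" using assms(2) by (metis add_2_eq_Suc le_Suc_ex)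
  have "(- 1 / x) ^ (p - 1) = (-1) ^ Suc m / x ^ Suc m"
    unfolding p diff_Suc_1 by (rule power_divide)
  then show ?thesis
    using assms(1) by (simp add: p flip: power_add)
qed

theorem mainTheorem11:
  fixes p :: nat
  assumes "p \<ge> 2"
  shows "Abs_fps (dseq p) = D_fps p
    \<and> g_fps p (D_fps p) = fps_X
    \<and> (\<forall>n\<ge>2. dseq p n = (-1) ^ p * (real p) ^ (p - 2) * tconv (dseq p) p n)"
proof -
  have p: "p > 0" using assms by simp
  have "dseq p n = (-1) ^ p * (real p) ^ (p - 2) * tconv (dseq p) p n" if n: "n \<ge> 2" for n
  proof -
    have "tconv (dseq p) p n = - real p * (- 1 / real p) ^ (p - 1) * dseq p n"
      using tconv_eq_if_fps_nth_power_eq_0[of n p "dseq p"] n p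
        fps_nth_D_fps_power_eq_0[OF p n] by (simp add: Abs_fps_dseq dseq_def)
    then have "(-1) ^ p * (real p) ^ (p - 2) * tconv (dseq p) p n
        = ((-1) ^ p * (real p) ^ (p - 2) * (- real p * (- 1 / real p) ^ (p - 1))) * dseq p n"
      by (simp only: mult.assoc)
    then show ?thesis
      using neg_inverse_power_cancel[of "real p" p] p assms by simp
  qed
  then show ?thesis
    using Abs_fps_dseq g_fps_D_fps[OF p] by simp
qed

end
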